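(* Let $\theta>0$, $\beta>0$ and let $m\ge1$ be an integer. Then the function $s\mapsto\log\mathcal L_{\mathsf P}(-s)=\log\mathbb E[e^{s\mathsf P}]$, for $s<0$, satisfies $$\frac{\partial^m}{\partial s^m}\log\mathcal L_{\mathsf P}(-s)\Big|_{s=-\frac1{\theta\beta}}=\frac2\alpha\lambda\pi(\theta\beta)^{m-\frac2\alpha}\,\mathbb E\Big[\mathsf g^{\frac2\alpha}\,\Gamma\Big(m-\tfrac2\alpha,\;\tfrac{\mathsf g}{\theta\beta}\max\{D^{-\alpha},\tfrac T{\mathsf g}\}\Big)\Big].$$
   Context: $\Phi=\{\mathsf x_i\}$ is a homogeneous Poisson point process on $\mathbb R^2$ with density $\lambda>0$, with i.i.d. marks $\mathsf g_i\ge0$ independent of $\Phi$ having a density, $\mathbb E[\mathsf g]=1$, $\mathbb E[\mathsf g^2]<\infty$. Fix $\alpha>2$, $D>0$, $T\ge0$; $\mathcal C=b(o,D)$ is the disk of radius $D$ centered at the origin. The useful power is $\mathsf P=\sum_{\mathsf x_i\in\Phi\cap\mathcal C}\mathsf g_i\|\mathsf x_i\|^{-\alpha}\mathbf 1(\mathsf g_i\|\mathsf x_i\|^{-\alpha}\ge T)$ and $\mathcal L_{\mathsf P}(s)=\mathbb E[e^{-s\mathsf P}]$. $\Gamma(a,x)=\int_x^\infty t^{a-1}e^{-t}dt$ (for $a\le 0$ it is defined for $x>0$ by the same integral). Convention for $T=0$: $T/\mathsf g=0$. *)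

theory Defs
  imports "HOL-Probability.Probability"
begin

definition disk_unif :: "real \<Rightarrow> (real^2) measure" where
  "disk_unif D = uniform_measure lborel (ball (0::real^2) D)"

text \<open>Probability space of the marked PPP restricted to C: a Poisson(lambda pi D^2) number
  of points, the i-th point being (x_i, g_i) with x_i uniform on C and g_i with law Gm,
  all independent (product measure).\<close>
definition ppp_space :: "real \<Rightarrow> real \<Rightarrow> real measure \<Rightarrow> (nat \<times> (nat \<Rightarrow> (real^2) \<times> real)) measure" where
  "ppp_space lam D Gm =
     measure_pmf (poisson_pmf (lam * pi * D\<^sup>2)) \<Otimes>\<^sub>M (\<Pi>\<^sub>M i\<in>UNIV. disk_unif D \<Otimes>\<^sub>M Gm)"

definition useful_power :: "real \<Rightarrow> real \<Rightarrow> nat \<times> (nat \<Rightarrow> (real^2) \<times> real) \<Rightarrow> real" where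
  "useful_power \<alpha> T \<omega> =
     (\<Sum>i<fst \<omega>. let x = fst (snd \<omega> i); g = snd (snd \<omega> i); v = g * norm x powr (-\<alpha>)
                  in v * (if v \<ge> T then 1 else 0))"

definition laplace_P :: "real \<Rightarrow> real \<Rightarrow> real \<Rightarrow> real \<Rightarrow> real measure \<Rightarrow> real \<Rightarrow> real" where
  "laplace_P lam \<alpha> D T Gm s =
     (\<integral>\<omega>. exp (- s * useful_power \<alpha> T \<omega>) \<partial>ppp_space lam D Gm)"

definition upper_Gamma :: "real \<Rightarrow> real \<Rightarrow> real" where
  "upper_Gamma a x = (LINT t:{x..}|lborel. t powr (a - 1) * exp (- t))"

end

theory Submission
  imports Defs "HOL-Real_Asymp.Real_Asymp"
begin

text \<open>Inside the disk the process is a Poisson number, with mean Lambda = lambda pi D^2, of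
  independent marked points, so E[exp(s P)] = exp(Lambda (E[exp(s v)] - 1)), where v is the
  useful power of a single point. Hence every derivative of order m >= 1 of the log-Laplace
  transform equals Lambda E[v^m exp(s v)]; differentiating under the integral is justified by
  v^n exp(-a v) <= n! / a^n. For a fixed mark g the distance of the point from the origin has
  density 2 r / D^2 on [0, D], the threshold cuts the radial integral off at
  r = max(D^-alpha, T/g)^(-1/alpha), and the substitution t = g r^-alpha / (theta beta) turns it
  into an upper incomplete Gamma function.\<close>

definition thresholded_power :: "real \<Rightarrow> real \<Rightarrow> (real^2) \<times> real \<Rightarrow> real" where
  "thresholded_power \<alpha> T p =
     (let v = snd p * norm (fst p) powr (-\<alpha>) in v * (if v \<ge> T then 1 else 0))"

lemma useful_power_eq_sum:
  "useful_power \<alpha> T \<omega> = (\<Sum>i<fst \<omega>. thresholded_power \<alpha> T (snd \<omega> i))"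
  by (simp add: useful_power_def thresholded_power_def Let_def)

lemma thresholded_power_nonneg: "T \<ge> 0 \<Longrightarrow> thresholded_power \<alpha> T p \<ge> 0"
  by (auto simp: thresholded_power_def Let_def)

lemma borel_measurable_thresholded_power:
  "thresholded_power \<alpha> T \<in> borel_measurable (borel \<Otimes>\<^sub>M borel)"
  unfolding thresholded_power_def Let_def by measurable

lemma sets_disk_unif [simp]: "sets (disk_unif D) = sets borel"
  by (simp add: disk_unif_def)

lemma borel_measurable_thresholded_power_pair:
  assumes "sets Gm = sets borel"
  shows "thresholded_power \<alpha> T \<in> borel_measurable (disk_unif D \<Otimes>\<^sub>M Gm)"
proof -
  have "sets (disk_unif D \<Otimes>\<^sub>M Gm) = sets (borel \<Otimes>\<^sub>M borel)"
    using assms by (intro sets_pair_measure_cong) auto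
  then show ?thesis
    using borel_measurable_thresholded_power measurable_cong_sets by blast
qed

lemma prob_space_disk_unif: "D > 0 \<Longrightarrow> prob_space (disk_unif D)"
  unfolding disk_unif_def
  by (rule prob_space_uniform_measure) (auto simp: emeasure_ball unit_ball_vol_2)

section \<open>Laplace transform of a compound Poisson sum\<close>

lemma nn_integral_PiM_prod_lessThan:
  fixes M :: "'a measure" and h :: "'a \<Rightarrow> real"
  assumes M: "prob_space M" and [measurable]: "h \<in> borel_measurable M"
  shows "(\<integral>\<^sup>+\<omega>. (\<Prod>i<n. ennreal (h (\<omega> i))) \<partial>(\<Pi>\<^sub>M i\<in>(UNIV::nat set). M))
       = (\<integral>\<^sup>+x. ennreal (h x) \<partial>M) ^ n"
proof -
  interpret product_prob_space "\<lambda>_::nat. M" UNIV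
    by (simp add: M product_prob_space_def product_prob_space_axioms_def product_sigma_finite_def
         prob_space_imp_sigma_finite)
  have "(\<integral>\<^sup>+\<omega>. (\<Prod>i<n. ennreal (h (\<omega> i))) \<partial>(\<Pi>\<^sub>M i\<in>(UNIV::nat set). M))
      = (\<integral>\<^sup>+\<omega>. (\<Prod>i<n. ennreal (h (restrict \<omega> {..<n} i))) \<partial>(\<Pi>\<^sub>M i\<in>(UNIV::nat set). M))"
    by (intro nn_integral_cong prod.cong) auto
  also have "\<dots> = (\<integral>\<^sup>+x. (\<Prod>i<n. ennreal (h (x i)))
                    \<partial>distr (\<Pi>\<^sub>M i\<in>(UNIV::nat set). M) (\<Pi>\<^sub>M i\<in>{..<n}. M) (\<lambda>x. restrict x {..<n}))"
    by (subst nn_integral_distr) (auto intro!: measurable_restrict_subset)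
  also have "\<dots> = (\<integral>\<^sup>+x. (\<Prod>i<n. ennreal (h (x i))) \<partial>(\<Pi>\<^sub>M i\<in>{..<n}. M))"
    by (subst distr_PiM_restrict_finite) auto
  also have "\<dots> = (\<Prod>i<n. (\<integral>\<^sup>+x. ennreal (h x) \<partial>M))"
    by (subst product_nn_integral_prod) auto
  finally show ?thesis by simp
qed

lemma nn_integral_poisson_power:
  fixes \<Lambda> \<phi> :: real
  assumes \<Lambda>: "\<Lambda> > 0" and \<phi>: "\<phi> \<ge> 0"
  shows "(\<integral>\<^sup>+n. ennreal \<phi> ^ n \<partial>measure_pmf (poisson_pmf \<Lambda>)) = ennreal (exp (\<Lambda> * (\<phi> - 1)))"
proof -
  have "(\<lambda>n. \<Lambda> ^ n / fact n * exp (- \<Lambda>) * \<phi> ^ n) sums (exp (- \<Lambda>) * exp (\<Lambda> * \<phi>))"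
    using sums_mult[OF exp_converges[of "\<Lambda> * \<phi>"], of "exp (- \<Lambda>)"]
    by (simp add: power_mult_distrib field_simps)
  then have "(\<Sum>n. ennreal (\<Lambda> ^ n / fact n * exp (- \<Lambda>) * \<phi> ^ n)) = ennreal (exp (\<Lambda> * (\<phi> - 1)))"
    using \<Lambda> \<phi> by (subst suminf_ennreal2) (auto simp: sums_iff mult_exp_exp algebra_simps)
  then show ?thesis
    using \<Lambda> \<phi> by (simp add: nn_integral_measure_pmf nn_integral_count_space_nat
        ennreal_power ennreal_mult''[symmetric] mult_ac)
qed

lemma integral_poisson_PiM_prod:
  fixes \<mu> :: "'a measure" and h :: "'a \<Rightarrow> real"
  assumes \<Lambda>: "\<Lambda> > 0" and \<mu>: "prob_space \<mu>"
    and [measurable]: "h \<in> borel_measurable \<mu>" and h_nonneg: "\<And>x. h x \<ge> 0"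
    and h_int: "integrable \<mu> h"
  shows "(\<integral>q. (\<Prod>i<fst q. h (snd q i)) \<partial>(measure_pmf (poisson_pmf \<Lambda>) \<Otimes>\<^sub>M (\<Pi>\<^sub>M i\<in>UNIV. \<mu>)))
         = exp (\<Lambda> * ((\<integral>x. h x \<partial>\<mu>) - 1))"
proof -
  define \<phi> where "\<phi> = (\<integral>x. h x \<partial>\<mu>)"
  have \<phi>_nonneg: "\<phi> \<ge> 0"
    unfolding \<phi>_def using h_nonneg by simp
  define N where "N = measure_pmf (poisson_pmf \<Lambda>)"
  define PP where "PP = (\<Pi>\<^sub>M i\<in>(UNIV::nat set). \<mu>)"
  interpret PP: prob_space PP
    unfolding PP_def using \<mu> by (rule prob_space_PiM)
  define F where "F q = (\<Prod>i<fst q. h (snd q i))" for q :: "nat \<times> (nat \<Rightarrow> 'a)"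
  have sets_NPP: "sets (N \<Otimes>\<^sub>M PP) = sets (count_space UNIV \<Otimes>\<^sub>M PP)"
    unfolding N_def by (intro sets_pair_measure_cong) auto
  have F_meas[measurable]: "F \<in> borel_measurable (N \<Otimes>\<^sub>M PP)"
    unfolding measurable_cong_sets[OF sets_NPP refl]
  proof (rule measurable_pair_measure_countable1)
    show "(\<lambda>\<omega>. F (n, \<omega>)) \<in> borel_measurable PP" for n
      unfolding F_def PP_def fst_conv snd_conv by measurable
  qed simp
  have inner: "(\<integral>\<^sup>+\<omega>. ennreal (F (n, \<omega>)) \<partial>PP) = ennreal \<phi> ^ n" for n
  proof -
    have "(\<integral>\<^sup>+\<omega>. ennreal (F (n, \<omega>)) \<partial>PP) = (\<integral>\<^sup>+\<omega>. (\<Prod>i<n. ennreal (h (\<omega> i))) \<partial>PP)"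
      using h_nonneg by (intro nn_integral_cong) (simp add: F_def prod_ennreal)
    also have "\<dots> = ennreal \<phi> ^ n"
      unfolding PP_def \<phi>_def using h_nonneg
      by (simp add: nn_integral_PiM_prod_lessThan[OF \<mu>] nn_integral_eq_integral[OF h_int])
    finally show ?thesis .
  qed
  have "(\<integral>q. F q \<partial>(N \<Otimes>\<^sub>M PP)) = enn2real (\<integral>\<^sup>+q. ennreal (F q) \<partial>(N \<Otimes>\<^sub>M PP))"
    by (rule integral_eq_nn_integral[OF F_meas]) (simp add: F_def prod_nonneg h_nonneg)
  also have "(\<integral>\<^sup>+q. ennreal (F q) \<partial>(N \<Otimes>\<^sub>M PP)) = (\<integral>\<^sup>+n. \<integral>\<^sup>+\<omega>. ennreal (F (n, \<omega>)) \<partial>PP \<partial>N)"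
    by (rule PP.nn_integral_fst[symmetric]) measurable
  also have "\<dots> = ennreal (exp (\<Lambda> * (\<phi> - 1)))"
    unfolding inner N_def using \<Lambda> \<phi>_nonneg by (rule nn_integral_poisson_power)
  finally show ?thesis
    using \<phi>_nonneg by (simp add: F_def N_def PP_def \<phi>_def)
qed

lemma laplace_P_eq_exp:
  fixes lam \<alpha> D T s :: real and Gm :: "real measure"
  assumes lam: "lam > 0" and D: "D > 0" and T: "T \<ge> 0" and s: "s \<le> 0"
    and Gm: "prob_space Gm" and sets_Gm: "sets Gm = sets borel"
  shows "laplace_P lam \<alpha> D T Gm (- s)
     = exp (lam * pi * D\<^sup>2 * ((\<integral>p. exp (s * thresholded_power \<alpha> T p) \<partial>(disk_unif D \<Otimes>\<^sub>M Gm)) - 1))"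
proof -
  let ?\<mu> = "disk_unif D \<Otimes>\<^sub>M Gm"
  interpret \<mu>: prob_space ?\<mu>
    by (intro prob_space_pair prob_space_disk_unif D Gm)
  have [measurable]: "thresholded_power \<alpha> T \<in> borel_measurable ?\<mu>"
    by (rule borel_measurable_thresholded_power_pair[OF sets_Gm])
  have bounded: "0 \<le> exp (s * thresholded_power \<alpha> T p) \<and> exp (s * thresholded_power \<alpha> T p) \<le> 1" for p
    using thresholded_power_nonneg[OF T, of \<alpha> p] s by (simp add: mult_nonpos_nonneg)
  have "laplace_P lam \<alpha> D T Gm (- s)
      = (\<integral>q. (\<Prod>i<fst q. exp (s * thresholded_power \<alpha> T (snd q i))) \<partial>ppp_space lam D Gm)"
    by (simp add: laplace_P_def useful_power_eq_sum sum_distrib_left exp_sum)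
  also have "\<dots> = exp (lam * pi * D\<^sup>2 * ((\<integral>p. exp (s * thresholded_power \<alpha> T p) \<partial>?\<mu>) - 1))"
  proof (unfold ppp_space_def, rule integral_poisson_PiM_prod)
    show "integrable ?\<mu> (\<lambda>p. exp (s * thresholded_power \<alpha> T p))"
      using bounded by (intro \<mu>.integrable_const_bound[where B=1]) auto
  qed (use lam D \<mu>.prob_space_axioms in auto)
  finally show ?thesis .
qed

section \<open>Derivatives of the log-Laplace transform\<close>

lemma power_mult_exp_neg_le:
  fixes a y :: real
  assumes a: "a > 0" and y: "y \<ge> 0"
  shows "y ^ n * exp (- (a * y)) \<le> fact n / a ^ n"
proof -
  have "(a * y) ^ n / fact n \<le> exp (a * y)"
  proof -
    have "(\<Sum>k\<in>{n}. (a * y) ^ k /\<^sub>R fact k) \<le> (\<Sum>k. (a * y) ^ k /\<^sub>R fact k)"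
      using a y by (intro sum_le_suminf summable_exp_generic) auto
    then show ?thesis by (simp add: sums_unique[OF exp_converges] divide_inverse mult.commute)
  qed
  then have "y ^ n \<le> fact n / a ^ n * exp (a * y)"
    using a by (simp add: power_mult_distrib field_simps)
  then have "y ^ n * exp (- (a * y)) \<le> fact n / a ^ n * exp (a * y) * exp (- (a * y))"
    by (rule mult_right_mono) simp
  also have "\<dots> = fact n / a ^ n"
    by (simp add: mult.assoc exp_minus_inverse)
  finally show ?thesis .
qed

lemma difference_quotient_bounded:
  fixes f f' :: "real \<Rightarrow> real"
  assumes S: "convex S" "x \<in> S" "y \<in> S" and "y \<noteq> x"
    and deriv: "\<And>t. t \<in> S \<Longrightarrow> (f has_real_derivative f' t) (at t within S)"
    and bound: "\<And>t. t \<in> S \<Longrightarrow> \<bar>f' t\<bar> \<le> C"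
  shows "\<bar>(f y - f x) / (y - x)\<bar> \<le> C"
proof -
  have "norm (f y - f x) \<le> C * norm (y - x)"
    using bound by (intro field_differentiable_bound[OF S(1) deriv _ S(3,2)]) auto
  then show ?thesis
    using \<open>y \<noteq> x\<close> by (simp add: abs_divide divide_le_eq)
qed

lemma has_real_derivative_integral:
  fixes M :: "'a measure" and F F' :: "real \<Rightarrow> 'a \<Rightarrow> real"
  assumes M: "finite_measure M" and r: "r > 0"
    and integrable: "\<And>s. s \<in> ball s0 r \<Longrightarrow> integrable M (F s)"
    and F'_meas: "F' s0 \<in> borel_measurable M"
    and deriv: "\<And>s x. s \<in> ball s0 r \<Longrightarrow> x \<in> space M \<Longrightarrow> ((\<lambda>s. F s x) has_real_derivative F' s x) (at s)"
    and bound: "\<And>s x. s \<in> ball s0 r \<Longrightarrow> x \<in> space M \<Longrightarrow> \<bar>F' s x\<bar> \<le> C"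
  shows "((\<lambda>s. \<integral>x. F s x \<partial>M) has_real_derivative (\<integral>x. F' s0 x \<partial>M)) (at s0)"
proof -
  interpret finite_measure M by (fact M)
  have s0: "s0 \<in> ball s0 r" using r by simp
  have "((\<lambda>s. ((\<integral>x. F s x \<partial>M) - (\<integral>x. F s0 x \<partial>M)) / (s - s0)) \<longlongrightarrow> (\<integral>x. F' s0 x \<partial>M))
          (at s0 within ball s0 r)"
    unfolding tendsto_at_iff_sequentially comp_def
  proof (intro allI impI)
    fix X :: "nat \<Rightarrow> real" assume X: "\<forall>i. X i \<in> ball s0 r - {s0}" and "X \<longlonglongrightarrow> s0"
    have "(\<lambda>i. \<integral>x. (F (X i) x - F s0 x) / (X i - s0) \<partial>M) \<longlonglongrightarrow> (\<integral>x. F' s0 x \<partial>M)"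
    proof (rule integral_dominated_convergence[where w="\<lambda>_. C"])
      show "(\<lambda>x. (F (X i) x - F s0 x) / (X i - s0)) \<in> borel_measurable M" for i
        using X s0 integrable by (intro borel_measurable_divide borel_measurable_diff) auto
      show "AE x in M. (\<lambda>i. (F (X i) x - F s0 x) / (X i - s0)) \<longlonglongrightarrow> F' s0 x"
      proof (rule AE_I2)
        fix x assume "x \<in> space M"
        then have "((\<lambda>s. (F s x - F s0 x) / (s - s0)) \<longlongrightarrow> F' s0 x) (at s0)"
          using deriv[OF s0] by (simp add: has_field_derivative_iff)
        then show "(\<lambda>i. (F (X i) x - F s0 x) / (X i - s0)) \<longlonglongrightarrow> F' s0 x"
          using X \<open>X \<longlonglongrightarrow> s0\<close> by (auto simp: tendsto_at_iff_sequentially comp_def)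
      qed
      show "AE x in M. norm ((F (X i) x - F s0 x) / (X i - s0)) \<le> C" for i
      proof (rule AE_I2)
        fix x assume x: "x \<in> space M"
        have "X i \<in> ball s0 r" "X i \<noteq> s0" using X by auto
        then show "norm ((F (X i) x - F s0 x) / (X i - s0)) \<le> C"
          using difference_quotient_bounded[of "ball s0 r" s0 "X i" "\<lambda>s. F s x" "\<lambda>s. F' s x" C]
            deriv[OF _ x] bound[OF _ x] s0
          by (simp add: has_field_derivative_at_within)
      qed
    qed (simp_all add: F'_meas)
    with X s0 integrable show "(\<lambda>i. ((\<integral>x. F (X i) x \<partial>M) - (\<integral>x. F s0 x \<partial>M)) / (X i - s0))
        \<longlonglongrightarrow> (\<integral>x. F' s0 x \<partial>M)"
      by (simp add: integral_divide_zero)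
  qed
  then show ?thesis
    unfolding has_field_derivative_iff at_within_open[OF s0 open_ball] .
qed

lemma funpow_deriv_eq:
  fixes f :: "real \<Rightarrow> real" and h :: "nat \<Rightarrow> real \<Rightarrow> real"
  assumes S: "open S"
    and deriv: "\<And>k s. s \<in> S \<Longrightarrow> (h k has_real_derivative h (Suc k) s) (at s)"
    and f: "\<And>s. s \<in> S \<Longrightarrow> f s = h 0 s"
  shows "s \<in> S \<Longrightarrow> (deriv ^^ k) f s = h k s"
proof (induction k arbitrary: s)
  case 0
  then show ?case using f by simp
next
  case (Suc k)
  have "((deriv ^^ k) f has_real_derivative h (Suc k) s) (at s)"
    using Suc by (intro has_field_derivative_transform_within_open[OF deriv S]) auto
  then show ?case by (simp add: DERIV_imp_deriv)
qed

lemma has_real_derivative_integral_power_exp: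
  fixes M :: "'a measure" and v :: "'a \<Rightarrow> real"
  assumes M: "finite_measure M" and v_meas: "v \<in> borel_measurable M"
    and v_nonneg: "\<And>x. v x \<ge> 0" and s: "s < 0"
  shows "((\<lambda>s. \<integral>x. v x ^ k * exp (s * v x) \<partial>M) has_real_derivative
          (\<integral>x. v x ^ Suc k * exp (s * v x) \<partial>M)) (at s)"
proof -
  interpret finite_measure M by (fact M)
  define a where "a = - s / 2"
  have a: "a > 0" using s by (simp add: a_def)
  have bound: "\<bar>v x ^ n * exp (t * v x)\<bar> \<le> fact n / a ^ n" if "t \<in> ball s a" for t x n
  proof -
    have "t \<le> - a" using that by (auto simp: a_def dist_real_def)
    then have "t * v x \<le> - (a * v x)"
      using mult_right_mono[OF \<open>t \<le> - a\<close> v_nonneg[of x]] by simp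
    then have "v x ^ n * exp (t * v x) \<le> v x ^ n * exp (- (a * v x))"
      using v_nonneg[of x] by (intro mult_left_mono) auto
    also have "\<dots> \<le> fact n / a ^ n" by (rule power_mult_exp_neg_le[OF a v_nonneg])
    finally show ?thesis using v_nonneg[of x] by simp
  qed
  show ?thesis
  proof (rule has_real_derivative_integral[where r=a and C="fact (Suc k) / a ^ Suc k"])
    show "integrable M (\<lambda>x. v x ^ k * exp (t * v x))" if "t \<in> ball s a" for t
      using bound[OF that] v_meas by (intro integrable_const_bound[where B="fact k / a ^ k"]) auto
    show "((\<lambda>s. v x ^ k * exp (s * v x)) has_real_derivative v x ^ Suc k * exp (t * v x)) (at t)" for t x
      by (auto intro!: derivative_eq_intros simp: algebra_simps)
    show "\<bar>v x ^ Suc k * exp (t * v x)\<bar> \<le> fact (Suc k) / a ^ Suc k" if "t \<in> ball s a" for t x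
      using bound[OF that] .
    show "(\<lambda>x. v x ^ Suc k * exp (s * v x)) \<in> borel_measurable M"
      using v_meas by measurable
  qed (simp_all add: M a)
qed

lemma funpow_deriv_ln_laplace_P:
  fixes lam \<alpha> D T s :: real and Gm :: "real measure" and m :: nat
  assumes lam: "lam > 0" and D: "D > 0" and T: "T \<ge> 0" and s: "s < 0" and m: "m \<ge> 1"
    and Gm: "prob_space Gm" and sets_Gm: "sets Gm = sets borel"
  shows "(deriv ^^ m) (\<lambda>s. ln (laplace_P lam \<alpha> D T Gm (- s))) s
     = lam * pi * D\<^sup>2 * (\<integral>p. thresholded_power \<alpha> T p ^ m * exp (s * thresholded_power \<alpha> T p)
                              \<partial>(disk_unif D \<Otimes>\<^sub>M Gm))"
proof -
  let ?\<mu> = "disk_unif D \<Otimes>\<^sub>M Gm" and ?v = "thresholded_power \<alpha> T" and ?\<Lambda> = "lam * pi * D\<^sup>2"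
  interpret \<mu>: prob_space ?\<mu>
    by (intro prob_space_pair prob_space_disk_unif D Gm)
  have v_meas: "?v \<in> borel_measurable ?\<mu>"
    by (rule borel_measurable_thresholded_power_pair[OF sets_Gm])
  define \<psi> where "\<psi> k s = (\<integral>p. ?v p ^ k * exp (s * ?v p) \<partial>?\<mu>)" for k s
  define h where "h k s = ?\<Lambda> * \<psi> k s - (if k = 0 then ?\<Lambda> else 0)" for k s
  have h_deriv: "(h k has_real_derivative h (Suc k) s) (at s)" if "s \<in> {..<0}" for k s
  proof -
    have "(\<psi> k has_real_derivative \<psi> (Suc k) s) (at s)"
      unfolding \<psi>_def using \<mu>.finite_measure_axioms v_meas thresholded_power_nonneg[OF T] that
      by (intro has_real_derivative_integral_power_exp) auto
    then show ?thesis
      unfolding h_def by (auto intro!: derivative_eq_intros)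
  qed
  have ln_eq: "ln (laplace_P lam \<alpha> D T Gm (- s)) = h 0 s" if "s \<in> {..<0}" for s
    using that by (simp add: laplace_P_eq_exp[OF lam D T _ Gm sets_Gm] h_def \<psi>_def right_diff_distrib)
  have "(deriv ^^ m) (\<lambda>s. ln (laplace_P lam \<alpha> D T Gm (- s))) s = h m s"
    using funpow_deriv_eq[of "{..<0}" h, OF _ h_deriv ln_eq] s by simp
  then show ?thesis using m by (simp add: h_def \<psi>_def)
qed

section \<open>Distance from the origin of a uniform point of the disk\<close>

definition disk_radius_density :: "real \<Rightarrow> real \<Rightarrow> real" where
  "disk_radius_density D r = indicator {0..D} r * (2 * r / D\<^sup>2)"

lemma borel_measurable_disk_radius_density [measurable]:
  "disk_radius_density D \<in> borel_measurable borel"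
  unfolding disk_radius_density_def by measurable

lemma nn_integral_disk_radius_density_atMost:
  fixes D x :: real
  assumes D: "D > 0"
  defines "a \<equiv> min (max x 0) D"
  shows "(\<integral>\<^sup>+r. ennreal (disk_radius_density D r) * indicator {..x} r \<partial>lborel) = ennreal (a\<^sup>2 / D\<^sup>2)"
proof -
  have a: "0 \<le> a" "a \<le> D" using D by (auto simp: a_def)
  have "(\<integral>\<^sup>+r. ennreal (disk_radius_density D r) * indicator {..x} r \<partial>lborel)
      = (\<integral>\<^sup>+r. ennreal (indicator {0..a} r *\<^sub>R (2 * r / D\<^sup>2)) \<partial>lborel)"
    using AE_lborel_singleton[of 0]
    by (intro nn_integral_cong_AE, eventually_elim)
      (auto simp: disk_radius_density_def indicator_def a_def min_def max_def)
  also have "\<dots> = ennreal (\<integral>r. indicator {0..a} r *\<^sub>R (2 * r / D\<^sup>2) \<partial>lborel)"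
  proof (rule nn_integral_eq_integral)
    have "continuous_on {0..a} (\<lambda>r. 2 * r / D\<^sup>2)" using D by (auto intro!: continuous_intros)
    from borel_integrable_atLeastAtMost'[OF this]
    show "integrable lborel (\<lambda>r. indicator {0..a} r *\<^sub>R (2 * r / D\<^sup>2))"
      unfolding set_integrable_def .
  qed (auto simp: indicator_def)
  also have "(\<integral>r. indicator {0..a} r *\<^sub>R (2 * r / D\<^sup>2) \<partial>lborel) = a\<^sup>2 / D\<^sup>2 - 0\<^sup>2 / D\<^sup>2"
  proof (rule integral_FTC_atLeastAtMost[OF a(1)])
    show "((\<lambda>r. r\<^sup>2 / D\<^sup>2) has_vector_derivative 2 * r / D\<^sup>2) (at r within {0..a})" for r
      using D by (auto intro!: derivative_eq_intros
          simp: has_real_derivative_iff_has_vector_derivative[symmetric] power2_eq_square)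
  qed (use D in \<open>auto intro!: continuous_intros\<close>)
  finally show ?thesis by simp
qed

lemma emeasure_disk_unif_norm_atMost:
  fixes D x :: real
  assumes D: "D > 0"
  shows "emeasure (disk_unif D) {y. norm y \<le> x} = ennreal ((min (max x 0) D)\<^sup>2 / D\<^sup>2)"
proof -
  have "ball 0 D \<inter> {y. norm y \<le> x} =
      (if x < 0 then {} else if x < D then cball (0::real^2) x else ball 0 D)"
    by (auto simp: dist_norm dest: order_trans[OF norm_ge_zero] le_less_trans[OF norm_ge_zero])
  then have "emeasure lborel (ball (0::real^2) D \<inter> {y. norm y \<le> x}) = ennreal (pi * (min (max x 0) D)\<^sup>2)"
    using D by (simp add: emeasure_cball emeasure_ball unit_ball_vol_2)
  then show ?thesis
    using D by (simp add: disk_unif_def emeasure_uniform_measure emeasure_ball unit_ball_vol_2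
        divide_ennreal)
qed

lemma distr_norm_disk_unif:
  fixes D :: real
  assumes D: "D > 0"
  shows "distr (disk_unif D) borel norm = density lborel (\<lambda>r. ennreal (disk_radius_density D r))"
    (is "?L = ?R")
proof (rule cdf_unique)
  interpret P: prob_space "disk_unif D" by (rule prob_space_disk_unif[OF D])
  have "norm \<in> borel_measurable (disk_unif D)"
    by (simp add: measurable_cong_sets[OF sets_disk_unif refl])
  then show "real_distribution ?L"
    by (auto intro!: real_distribution.intro P.prob_space_distr simp: real_distribution_axioms_def)
  have "emeasure ?R (space ?R) = (\<integral>\<^sup>+r. ennreal (disk_radius_density D r) * indicator {..D} r \<partial>lborel)"
    by (auto simp: emeasure_density disk_radius_density_def indicator_def intro!: nn_integral_cong)
  also have "\<dots> = 1"
    using D by (simp add: nn_integral_disk_radius_density_atMost)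
  finally have "emeasure ?R (space ?R) = 1" .
  then show "real_distribution ?R"
    by (auto intro!: real_distribution.intro prob_spaceI simp: real_distribution_axioms_def)
  show "cdf ?L = cdf ?R"
  proof
    fix x
    have "emeasure ?L {..x} = emeasure (disk_unif D) {y. norm y \<le> x}"
      by (subst emeasure_distr) (auto simp: disk_unif_def vimage_def)
    also have "\<dots> = emeasure ?R {..x}"
      using D by (simp add: emeasure_density emeasure_disk_unif_norm_atMost
          nn_integral_disk_radius_density_atMost)
    finally have "emeasure ?L {..x} = emeasure ?R {..x}" .
    then show "cdf ?L x = cdf ?R x" by (simp add: cdf_def measure_def)
  qed
qed

lemma integral_disk_unif_radial:
  fixes H :: "real \<Rightarrow> real"
  assumes D: "D > 0" and [measurable]: "H \<in> borel_measurable borel"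
  shows "(\<integral>x. H (norm x) \<partial>disk_unif D) = (\<integral>r. disk_radius_density D r * H r \<partial>lborel)"
proof -
  have "(\<integral>x. H (norm x) \<partial>disk_unif D) = (\<integral>r. H r \<partial>distr (disk_unif D) borel norm)"
    by (rule integral_distr[symmetric]) (auto simp: measurable_cong_sets[OF sets_disk_unif refl])
  also have "\<dots> = (\<integral>r. disk_radius_density D r * H r \<partial>lborel)"
    unfolding distr_norm_disk_unif[OF D]
    by (subst integral_density) (auto simp: disk_radius_density_def indicator_def intro!: AE_I2)
  finally show ?thesis .
qed

section \<open>Reduction to the upper incomplete Gamma function\<close>

lemma upper_Gamma_eq_interval_integral_reflect:
  "upper_Gamma a b = (LBINT y=-\<infinity>..ereal (- b). (- y) powr (a - 1) * exp y)"
proof -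
  have "(LBINT y=-\<infinity>..ereal (- b). (- y) powr (a - 1) * exp y)
      = (LBINT y=ereal b..\<infinity>. y powr (a - 1) * exp (- y))"
    by (subst interval_integral_reflect) simp
  also have "\<dots> = (LBINT y:{b<..}. y powr (a - 1) * exp (- y))"
    by (rule interval_integral_to_infinity_eq)
  also have "\<dots> = (LBINT y:{b..}. y powr (a - 1) * exp (- y))"
    by (rule set_integral_discrete_difference[where X="{b}"]) auto
  finally show ?thesis
    unfolding upper_Gamma_def by simp
qed

lemma upper_Gamma_integrand_substitution:
  fixes g c \<alpha> r :: real and m :: nat
  assumes g: "g > 0" and c: "c > 0" and \<alpha>: "\<alpha> > 2" and r: "r > 0"
  defines "u \<equiv> g / c * r powr - \<alpha>"
  shows "u powr (real m - 2 / \<alpha> - 1) * exp (- u) * (g / c * \<alpha> * r powr (- \<alpha> - 1))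
       = \<alpha> * c powr (2 / \<alpha> - real m) * g powr (- 2 / \<alpha>)
           * (r * (g * r powr - \<alpha>) ^ m * exp (- (g * r powr - \<alpha>) / c))"
proof -
  have powers: "u powr (real m - 2 / \<alpha> - 1) * (g / c * r powr (- \<alpha> - 1))
      = c powr (2 / \<alpha> - real m) * g powr (- 2 / \<alpha>) * (r * (g * r powr - \<alpha>) ^ m)"
  proof (rule ln_inj_iff[THEN iffD1])
    show "ln (u powr (real m - 2 / \<alpha> - 1) * (g / c * r powr (- \<alpha> - 1)))
        = ln (c powr (2 / \<alpha> - real m) * g powr (- 2 / \<alpha>) * (r * (g * r powr - \<alpha>) ^ m))"
      using g c r \<alpha> by (simp add: u_def ln_mult ln_div ln_realpow field_simps)
  qed (use g c r in \<open>simp_all add: u_def\<close>)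
  have exp_u: "exp (- u) = exp (- (g * r powr - \<alpha>) / c)"
    by (simp add: u_def)
  have "u powr (real m - 2 / \<alpha> - 1) * exp (- u) * (g / c * \<alpha> * r powr (- \<alpha> - 1))
      = \<alpha> * exp (- (g * r powr - \<alpha>) / c) * (u powr (real m - 2 / \<alpha> - 1) * (g / c * r powr (- \<alpha> - 1)))"
    by (simp only: exp_u mult_ac)
  also have "\<dots> = \<alpha> * exp (- (g * r powr - \<alpha>) / c)
      * (c powr (2 / \<alpha> - real m) * g powr (- 2 / \<alpha>) * (r * (g * r powr - \<alpha>) ^ m))"
    by (simp only: powers)
  finally show ?thesis
    by (simp only: mult_ac)
qed

lemma interval_integral_eq_upper_Gamma:
  fixes g c \<alpha> K :: real and m :: nat
  assumes g: "g > 0" and c: "c > 0" and \<alpha>: "\<alpha> > 2" and K: "K > 0"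
  shows "(LBINT r=0..K powr (- 1 / \<alpha>). r * (g * r powr - \<alpha>) ^ m * exp (- (g * r powr - \<alpha>) / c))
       = c powr (real m - 2 / \<alpha>) * g powr (2 / \<alpha>) / \<alpha> * upper_Gamma (real m - 2 / \<alpha>) (g / c * K)"
proof -
  define R where "R = K powr (- 1 / \<alpha>)"
  define a where "a = real m - 2 / \<alpha>"
  define \<kappa> where "\<kappa> = \<alpha> * c powr (2 / \<alpha> - real m) * g powr (- 2 / \<alpha>)"
  define u where "u r = - (g / c) * r powr - \<alpha>" for r
  define u' where "u' r = g / c * \<alpha> * r powr (- \<alpha> - 1)" for r
  define f where "f y = (- y) powr (a - 1) * exp y" for y
  define Q where "Q r = r * (g * r powr - \<alpha>) ^ m * exp (- (g * r powr - \<alpha>) / c)" for r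
  have R: "R > 0" using K by (simp add: R_def)
  have \<kappa>: "\<kappa> > 0" using \<alpha> c g by (simp add: \<kappa>_def)
  have fu: "f (u r) * u' r = \<kappa> * Q r" if "r > 0" for r
    using upper_Gamma_integrand_substitution[OF g c \<alpha> that, of m]
    by (simp add: f_def u_def u'_def \<kappa>_def Q_def a_def)
  have Q_bound: "\<bar>Q r\<bar> \<le> R * (fact m * c ^ m)" if "0 < r" "r < R" for r
  proof -
    have "(g * r powr - \<alpha>) ^ m * exp (- ((1 / c) * (g * r powr - \<alpha>))) \<le> fact m / (1 / c) ^ m"
      using c g by (intro power_mult_exp_neg_le) auto
    then have "(g * r powr - \<alpha>) ^ m * exp (- (g * r powr - \<alpha>) / c) \<le> fact m * c ^ m"
      by (simp add: power_one_over)
    with that show ?thesis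
      using g by (simp add: Q_def abs_mult mult.assoc mult_mono)
  qed
  have "(LBINT y=-\<infinity>..ereal (u R). f y) = (LBINT r=0..ereal R. f (u r) * u' r)"
  proof (rule interval_integral_substitution_nonneg(2))
    show "set_integrable lborel (einterval 0 R) (\<lambda>r. f (u r) * u' r)"
      unfolding set_integrable_def
    proof (rule integrableI_bounded_set[where A="{0<..<R}" and B="\<kappa> * (R * (fact m * c ^ m))"])
      show "AE r in lborel. r \<in> {0<..<R} \<longrightarrow>
          norm (indicat_real (einterval 0 R) r *\<^sub>R (f (u r) * u' r)) \<le> \<kappa> * (R * (fact m * c ^ m))"
        using Q_bound \<kappa> by (auto simp: fu abs_mult zero_ereal_def)
    qed (use R in \<open>auto simp: f_def u_def u'_def emeasure_lborel_Ioo zero_ereal_def\<close>)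
    show "((ereal \<circ> u \<circ> real_of_ereal) \<longlongrightarrow> - \<infinity>) (at_right 0)"
      using g c \<alpha> unfolding zero_ereal_def ereal_tendsto_simps u_def by real_asymp
    show "((ereal \<circ> u \<circ> real_of_ereal) \<longlongrightarrow> ereal (u R)) (at_left (ereal R))"
      unfolding ereal_tendsto_simps using R c
      by (intro tendsto_within_subset[OF isCont_tendsto_compose[OF _ tendsto_ident_at]])
        (auto simp: u_def intro!: continuous_intros)
  qed (use g c \<alpha> R in \<open>auto simp: f_def u_def u'_def zero_ereal_def
        intro!: derivative_eq_intros continuous_intros\<close>)
  moreover have "u R = - (g / c * K)"
    using K \<alpha> by (simp add: u_def R_def powr_powr)
  moreover have "(LBINT r=0..ereal R. f (u r) * u' r) = \<kappa> * (LBINT r=0..ereal R. Q r)"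
    using R by (subst interval_integral_cong[where g="\<lambda>r. \<kappa> * Q r"])
      (auto simp: fu zero_ereal_def einterval_def)
  ultimately have "upper_Gamma a (g / c * K) = \<kappa> * (LBINT r=0..R. Q r)"
    by (simp add: upper_Gamma_eq_interval_integral_reflect f_def)
  then have "(LBINT r=0..R. Q r) = inverse \<kappa> * upper_Gamma a (g / c * K)"
    using \<kappa> by simp
  also have "inverse \<kappa> = c powr (real m - 2 / \<alpha>) * g powr (2 / \<alpha>) / \<alpha>"
  proof -
    have "c powr (2 / \<alpha> - real m) = inverse (c powr (real m - 2 / \<alpha>))"
      by (metis minus_diff_eq powr_minus)
    moreover have "g powr (- 2 / \<alpha>) = inverse (g powr (2 / \<alpha>))"
      by (metis minus_divide_left powr_minus)
    ultimately show ?thesis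
      using \<alpha> by (simp add: \<kappa>_def field_simps)
  qed
  finally show ?thesis
    unfolding R_def Q_def a_def .
qed

lemma threshold_le_iff_less_radius:
  fixes \<alpha> g T D r :: real
  assumes \<alpha>: "\<alpha> > 0" and g: "g > 0" and r: "0 < r" "r \<le> D"
  defines "R \<equiv> max (D powr - \<alpha>) (T / g) powr (- 1 / \<alpha>)"
  assumes "r \<noteq> R"
  shows "T \<le> g * r powr - \<alpha> \<longleftrightarrow> r < R"
proof -
  define K where "K = max (D powr - \<alpha>) (T / g)"
  have K: "K > 0" using r by (simp add: K_def less_max_iff_disj)
  have R_pos: "R > 0" using K by (simp add: R_def K_def)
  have R_powr: "R powr - \<alpha> = K" using K \<alpha> by (simp add: R_def K_def powr_powr)
  have D_le: "D powr - \<alpha> \<le> r powr - \<alpha>" using r \<alpha> by (intro powr_mono2') auto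
  show ?thesis
  proof (cases "r < R")
    case True
    then have "K < r powr - \<alpha>" using r \<alpha> R_powr by (metis neg_less_0_iff_less powr_less_mono2_neg)
    then have "T / g < r powr - \<alpha>" by (simp add: K_def)
    then show ?thesis using True g by (simp add: divide_less_eq mult.commute)
  next
    case False
    then have "R < r" using \<open>r \<noteq> R\<close> by simp
    then have "r powr - \<alpha> < K" using R_pos \<alpha> R_powr by (metis neg_less_0_iff_less powr_less_mono2_neg)
    then have "r powr - \<alpha> < T / g" using D_le by (simp add: K_def)
    then show ?thesis using False g by (simp add: less_divide_eq mult.commute)
  qed
qed

lemma integral_disk_unif_thresholded_power:
  fixes D T \<alpha> c g :: real and m :: nat
  assumes D: "D > 0" and \<alpha>: "\<alpha> > 2" and m: "m \<ge> 1" and c: "c > 0" and g: "g \<ge> 0"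
  shows "(\<integral>x. thresholded_power \<alpha> T (x, g) ^ m * exp (- 1 / c * thresholded_power \<alpha> T (x, g)) \<partial>disk_unif D)
       = 2 / (\<alpha> * D\<^sup>2) * c powr (real m - 2 / \<alpha>)
           * (g powr (2 / \<alpha>) * upper_Gamma (real m - 2 / \<alpha>) (g / c * max (D powr - \<alpha>) (T / g)))"
proof (cases "g = 0")
  case True
  then show ?thesis using m by (simp add: thresholded_power_def)
next
  case False
  then have g: "g > 0" using g by simp
  define K where "K = max (D powr - \<alpha>) (T / g)"
  define R where "R = K powr (- 1 / \<alpha>)"
  define w where "w r = (let v = g * r powr - \<alpha> in v * (if v \<ge> T then 1 else 0))" for r
  define H where "H r = w r ^ m * exp (- 1 / c * w r)" for r
  define Q where "Q r = r * (g * r powr - \<alpha>) ^ m * exp (- (g * r powr - \<alpha>) / c)" for r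
  have K: "K > 0" using D by (simp add: K_def less_max_iff_disj)
  have "K powr (- 1 / \<alpha>) \<le> (D powr - \<alpha>) powr (- 1 / \<alpha>)"
    using \<alpha> D K by (intro powr_mono2') (auto simp: K_def)
  then have R: "0 < R" "R \<le> D"
    using K D \<alpha> by (simp_all add: R_def powr_powr)
  have H_meas [measurable]: "H \<in> borel_measurable borel"
    unfolding H_def w_def Let_def by measurable
  have H_radial: "disk_radius_density D r * H r = indicator {0<..<R} r * (2 / D\<^sup>2 * Q r)"
    if "r \<noteq> 0" "r \<noteq> R" for r
  proof (cases "0 < r \<and> r \<le> D")
    case True
    then have "T \<le> g * r powr - \<alpha> \<longleftrightarrow> r < R"
      using threshold_le_iff_less_radius[of \<alpha> g r D T] \<alpha> g \<open>r \<noteq> R\<close> by (simp add: R_def K_def)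
    then show ?thesis
      using True R m by (auto simp: disk_radius_density_def H_def w_def Q_def indicator_def)
  qed (use that R in \<open>auto simp: disk_radius_density_def indicator_def\<close>)
  have "(\<integral>x. thresholded_power \<alpha> T (x, g) ^ m * exp (- 1 / c * thresholded_power \<alpha> T (x, g)) \<partial>disk_unif D)
      = (\<integral>x. H (norm x) \<partial>disk_unif D)"
    by (simp add: H_def w_def thresholded_power_def)
  also have "\<dots> = (\<integral>r. disk_radius_density D r * H r \<partial>lborel)"
    by (rule integral_disk_unif_radial[OF D H_meas])
  also have "\<dots> = (\<integral>r. indicator {0<..<R} r * (2 / D\<^sup>2 * Q r) \<partial>lborel)"
  proof (rule integral_cong_AE)
    show "AE r in lborel. disk_radius_density D r * H r = indicator {0<..<R} r * (2 / D\<^sup>2 * Q r)"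
      using AE_lborel_singleton[of 0] AE_lborel_singleton[of R] by eventually_elim (rule H_radial)
  qed (unfold Q_def, measurable)+
  also have "\<dots> = 2 / D\<^sup>2 * (LBINT r=0..R. Q r)"
    using R by (simp add: interval_integral_Ioo zero_ereal_def set_lebesgue_integral_def mult.left_commute)
  also have "\<dots> = 2 / (\<alpha> * D\<^sup>2) * c powr (real m - 2 / \<alpha>) * (g powr (2 / \<alpha>) * upper_Gamma (real m - 2 / \<alpha>) (g / c * K))"
    unfolding Q_def R_def interval_integral_eq_upper_Gamma[OF g c \<alpha> K] by (simp add: mult_ac)
  finally show ?thesis by (simp add: K_def)
qed

lemma borel_measurable_upper_Gamma [measurable]: "upper_Gamma a \<in> borel_measurable borel"
proof -
  have "(\<lambda>(x, t). if x \<le> t then t powr (a - 1) * exp (- t) else 0) \<in> borel_measurable (borel \<Otimes>\<^sub>M lborel)"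
    by measurable
  from lborel.borel_measurable_lebesgue_integral[OF this]
  have "(\<lambda>x. \<integral>t. (if x \<le> t then t powr (a - 1) * exp (- t) else 0) \<partial>lborel) \<in> borel_measurable borel"
    by simp
  moreover have "upper_Gamma a = (\<lambda>x. \<integral>t. (if x \<le> t then t powr (a - 1) * exp (- t) else 0) \<partial>lborel)"
    unfolding upper_Gamma_def set_lebesgue_integral_def
    by (intro ext Bochner_Integration.integral_cong) (auto simp: indicator_def)
  ultimately show ?thesis by simp
qed

lemma integral_pair_disk_unif_thresholded_power:
  fixes D T \<alpha> c :: real and m :: nat and Gm :: "real measure"
  assumes D: "D > 0" and T: "T \<ge> 0" and \<alpha>: "\<alpha> > 2" and m: "m \<ge> 1" and c: "c > 0"
    and Gm: "prob_space Gm" and sets_Gm: "sets Gm = sets borel" and g_nonneg: "AE g in Gm. g \<ge> 0"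
  shows "(\<integral>p. thresholded_power \<alpha> T p ^ m * exp (- 1 / c * thresholded_power \<alpha> T p) \<partial>(disk_unif D \<Otimes>\<^sub>M Gm))
       = 2 / (\<alpha> * D\<^sup>2) * c powr (real m - 2 / \<alpha>)
           * (\<integral>g. g powr (2 / \<alpha>) * upper_Gamma (real m - 2 / \<alpha>) (g / c * max (D powr - \<alpha>) (T / g)) \<partial>Gm)"
proof -
  interpret disk: prob_space "disk_unif D" by (rule prob_space_disk_unif[OF D])
  interpret Gm: prob_space Gm by (fact Gm)
  interpret pair_prob_space "disk_unif D" Gm ..
  define G where "G p = thresholded_power \<alpha> T p ^ m * exp (- 1 / c * thresholded_power \<alpha> T p)" for p
  have [measurable]: "thresholded_power \<alpha> T \<in> borel_measurable (disk_unif D \<Otimes>\<^sub>M Gm)"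
    by (rule borel_measurable_thresholded_power_pair[OF sets_Gm])
  have G_meas [measurable]: "G \<in> borel_measurable (disk_unif D \<Otimes>\<^sub>M Gm)"
    unfolding G_def by measurable
  have "\<bar>G p\<bar> \<le> fact m / (1 / c) ^ m" for p
    using power_mult_exp_neg_le[of "1 / c" "thresholded_power \<alpha> T p" m] c thresholded_power_nonneg[OF T]
    by (simp add: G_def)
  then have "integrable (disk_unif D \<Otimes>\<^sub>M Gm) G"
    by (intro integrable_const_bound[where B="fact m / (1 / c) ^ m"]) auto
  then have "(\<integral>p. G p \<partial>(disk_unif D \<Otimes>\<^sub>M Gm)) = (\<integral>g. (\<integral>x. G (x, g) \<partial>disk_unif D) \<partial>Gm)"
    using integral_snd[of "\<lambda>x g. G (x, g)"] by simp
  also have "\<dots> = (\<integral>g. 2 / (\<alpha> * D\<^sup>2) * c powr (real m - 2 / \<alpha>)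
      * (g powr (2 / \<alpha>) * upper_Gamma (real m - 2 / \<alpha>) (g / c * max (D powr - \<alpha>) (T / g))) \<partial>Gm)"
  proof (rule integral_cong_AE)
    have "(\<lambda>(g, x). G (x, g)) \<in> borel_measurable (Gm \<Otimes>\<^sub>M disk_unif D)"
      by measurable
    then show "(\<lambda>g. \<integral>x. G (x, g) \<partial>disk_unif D) \<in> borel_measurable Gm"
      by (rule disk.borel_measurable_lebesgue_integral[where f="\<lambda>g x. G (x, g)", simplified])
    show "AE g in Gm. (\<integral>x. G (x, g) \<partial>disk_unif D) = 2 / (\<alpha> * D\<^sup>2) * c powr (real m - 2 / \<alpha>)
        * (g powr (2 / \<alpha>) * upper_Gamma (real m - 2 / \<alpha>) (g / c * max (D powr - \<alpha>) (T / g)))"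
      using g_nonneg
      by eventually_elim (simp only: G_def integral_disk_unif_thresholded_power[OF D \<alpha> m c])
  qed (simp add: measurable_cong_sets[OF sets_Gm refl])
  finally show ?thesis
    by (simp add: G_def)
qed

theorem lemma3:
  fixes lam \<alpha> D T \<theta> \<beta> :: real and m :: nat and f :: "real \<Rightarrow> real" and Gm :: "real measure"
  assumes lam_pos: "lam > 0" and alpha_gt: "\<alpha> > 2" and D_pos: "D > 0" and T_nonneg: "T \<ge> 0"
    and f_meas: "f \<in> borel_measurable lborel" and f_nonneg: "\<And>x. f x \<ge> 0"
    and Gm_def: "Gm = density lborel f"
    and Gm_prob: "prob_space Gm"
    and g_nonneg: "AE g in Gm. g \<ge> 0"
    and g_mean: "integrable Gm (\<lambda>g. g)" "(\<integral>g. g \<partial>Gm) = 1"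
    and g_sq: "integrable Gm (\<lambda>g. g\<^sup>2)"
    and theta_pos: "\<theta> > 0" and beta_pos: "\<beta> > 0" and m_pos: "m \<ge> 1"
  shows "(deriv ^^ m) (\<lambda>s. ln (laplace_P lam \<alpha> D T Gm (- s))) (- 1 / (\<theta> * \<beta>))
         = 2 / \<alpha> * lam * pi * (\<theta> * \<beta>) powr (real m - 2 / \<alpha>)
           * (\<integral>g. g powr (2 / \<alpha>)
                  * upper_Gamma (real m - 2 / \<alpha>) (g / (\<theta> * \<beta>) * max (D powr (- \<alpha>)) (T / g)) \<partial>Gm)"
proof -
  \<comment> \<open>Only that the mark law is a probability on the Borel sets carried by \<open>[0, \<infinity>)\<close> is
    needed.\<close>
  have sets_Gm: "sets Gm = sets borel" using Gm_def by simp
  have c: "\<theta> * \<beta> > 0" using theta_pos beta_pos by simp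
  then have "- 1 / (\<theta> * \<beta>) < 0" by simp
  from funpow_deriv_ln_laplace_P[OF lam_pos D_pos T_nonneg this m_pos Gm_prob sets_Gm]
    integral_pair_disk_unif_thresholded_power[OF D_pos T_nonneg alpha_gt m_pos c Gm_prob sets_Gm g_nonneg]
  show ?thesis
    using D_pos by (simp add: field_simps)
qed

end
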